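(* Let $N\ge1$, $\Lambda=\{0,1,\dots,N\}$, and let $T$ be the $(N+1)\times(N+1)$ Toeplitz matrix whose $(i,j)$ entry is $a_{i-j}$ ($i,j\in\Lambda$, with $a_{-N},\dots,a_N\in\mathbb{C}$), acting on $\mathbb{C}^{N+1}$ with standard basis $\{e_n\}_{n\in\Lambda}$. Let $C$ be a conjugation on $\mathbb{C}^{N+1}$ and $\{f_n\}_{n\in\Lambda}$ an orthonormal basis with $Cf_n=f_n$ for all $n$, and put $c_{n,m}=\sum_{k=0}^N\langle f_k,e_n\rangle\langle f_k,e_m\rangle$ for $m,n\in\Lambda$. Then $T$ is $C$-symmetric if and only if \[ \sum_{m=0}^{N}c_{m,p}\,\bar a_{m-k}=\sum_{m=0}^{N}c_{m,k}\,\bar a_{m-p}\qquad\text{for all }k,p\in\Lambda. \]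
   Context: A conjugation is an anti-linear, involutive ($C^2=I$), isometric map; $T$ is $C$-symmetric if $CT^*C=T$. The inner product on $\mathbb{C}^{N+1}$ is linear in the first entry. *)

theory Defs
  imports Complex_Main
begin

text \<open>Vectors of C^(N+1) are represented as functions nat => complex vanishing
  outside {0..N}; matrices as functions nat => nat => complex (entries with
  indices in {0..N} are relevant).\<close>

definition cvecs :: "nat \<Rightarrow> (nat \<Rightarrow> complex) set" where
  "cvecs N = {x. \<forall>i>N. x i = 0}"

definition cinner :: "nat \<Rightarrow> (nat \<Rightarrow> complex) \<Rightarrow> (nat \<Rightarrow> complex) \<Rightarrow> complex" where
  "cinner N x y = (\<Sum>k\<le>N. x k * cnj (y k))"

definition std_basis :: "nat \<Rightarrow> nat \<Rightarrow> complex" where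
  "std_basis n = (\<lambda>i. if i = n then 1 else 0)"

definition mat_app :: "nat \<Rightarrow> (nat \<Rightarrow> nat \<Rightarrow> complex) \<Rightarrow> (nat \<Rightarrow> complex) \<Rightarrow> (nat \<Rightarrow> complex)" where
  "mat_app N T x = (\<lambda>i. if i \<le> N then (\<Sum>j\<le>N. T i j * x j) else 0)"

definition mat_adj :: "(nat \<Rightarrow> nat \<Rightarrow> complex) \<Rightarrow> (nat \<Rightarrow> nat \<Rightarrow> complex)" where
  "mat_adj T = (\<lambda>i j. cnj (T j i))"

definition toeplitz :: "(int \<Rightarrow> complex) \<Rightarrow> (nat \<Rightarrow> nat \<Rightarrow> complex)" where
  "toeplitz a = (\<lambda>i j. a (int i - int j))"

definition is_conjugation :: "nat \<Rightarrow> ((nat \<Rightarrow> complex) \<Rightarrow> (nat \<Rightarrow> complex)) \<Rightarrow> bool" where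
  "is_conjugation N C \<longleftrightarrow>
     (\<forall>x\<in>cvecs N. C x \<in> cvecs N) \<and>
     (\<forall>x\<in>cvecs N. \<forall>y\<in>cvecs N. C (\<lambda>i. x i + y i) = (\<lambda>i. C x i + C y i)) \<and>
     (\<forall>x\<in>cvecs N. \<forall>c. C (\<lambda>i. c * x i) = (\<lambda>i. cnj c * C x i)) \<and>
     (\<forall>x\<in>cvecs N. C (C x) = x) \<and>
     (\<forall>x\<in>cvecs N. cinner N (C x) (C x) = cinner N x x)"

definition C_symmetric :: "nat \<Rightarrow> ((nat \<Rightarrow> complex) \<Rightarrow> (nat \<Rightarrow> complex)) \<Rightarrow> (nat \<Rightarrow> nat \<Rightarrow> complex) \<Rightarrow> bool" where
  "C_symmetric N C T \<longleftrightarrow> (\<forall>x\<in>cvecs N. C (mat_app N (mat_adj T) (C x)) = mat_app N T x)"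

definition orthonormal_basis :: "nat \<Rightarrow> (nat \<Rightarrow> nat \<Rightarrow> complex) \<Rightarrow> bool" where
  "orthonormal_basis N f \<longleftrightarrow>
     (\<forall>n\<le>N. f n \<in> cvecs N) \<and>
     (\<forall>n\<le>N. \<forall>m\<le>N. cinner N (f n) (f m) = (if n = m then 1 else 0)) \<and>
     (\<forall>x\<in>cvecs N. x = (\<lambda>i. \<Sum>n\<le>N. cinner N x (f n) * f n i))"

end

theory Submission
  imports Defs
begin

text \<open>A conjugation fixing the orthonormal basis \<open>f\<close> acts as \<open>C x = J x\<^sup>*\<close>
  (entrywise conjugate), with the symmetric matrix \<open>J = \<Sum>\<^sub>n f\<^sub>n f\<^sub>n\<^sup>T\<close> whose entries
  are the \<open>c\<^sub>n\<^sub>,\<^sub>m\<close>. As \<open>C\<close> is an involution, \<open>C T\<^sup>* C = T\<close> is equivalent to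
  \<open>T\<^sup>* C = C T\<close>, and both sides are maps \<open>x \<mapsto> M x\<^sup>*\<close>, with \<open>M = T\<^sup>* J\<close> and
  \<open>M = J T\<^sup>*\<^sup>T\<close> respectively; comparing entries gives the stated identities.\<close>

definition mat_mul :: "nat \<Rightarrow> (nat \<Rightarrow> nat \<Rightarrow> complex) \<Rightarrow> (nat \<Rightarrow> nat \<Rightarrow> complex) \<Rightarrow> (nat \<Rightarrow> nat \<Rightarrow> complex)"
  where "mat_mul N A B = (\<lambda>i j. \<Sum>k\<le>N. A i k * B k j)"

definition basis_conj_matrix :: "nat \<Rightarrow> (nat \<Rightarrow> nat \<Rightarrow> complex) \<Rightarrow> (nat \<Rightarrow> nat \<Rightarrow> complex)"
  where "basis_conj_matrix N f = (\<lambda>i k. \<Sum>n\<le>N. f n i * f n k)"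

lemma basis_conj_matrix_sym: "basis_conj_matrix N f i k = basis_conj_matrix N f k i"
  by (simp add: basis_conj_matrix_def mult.commute)

lemma mat_app_in_cvecs: "mat_app N A x \<in> cvecs N"
  by (simp add: mat_app_def cvecs_def)

lemma mat_app_mat_app: "mat_app N A (mat_app N B x) = mat_app N (mat_mul N A B) x"
proof (rule ext)
  fix i
  have "(\<Sum>j\<le>N. A i j * (\<Sum>l\<le>N. B j l * x l)) = (\<Sum>j\<le>N. \<Sum>l\<le>N. A i j * B j l * x l)"
    by (simp add: sum_distrib_left mult.assoc)
  also have "\<dots> = (\<Sum>l\<le>N. (\<Sum>j\<le>N. A i j * B j l) * x l)"
    by (subst sum.swap) (simp add: sum_distrib_right)
  finally show "mat_app N A (mat_app N B x) i = mat_app N (mat_mul N A B) x i"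
    by (simp add: mat_app_def mat_mul_def)
qed

lemma cnj_mat_app: "(\<lambda>i. cnj (mat_app N A x i)) = mat_app N (\<lambda>i j. cnj (A i j)) (\<lambda>i. cnj (x i))"
  by (simp add: mat_app_def fun_eq_iff)

lemma mat_app_std_basis: "j \<le> N \<Longrightarrow> mat_app N A (std_basis j) i = (if i \<le> N then A i j else 0)"
  by (simp add: mat_app_def std_basis_def if_distrib cong: if_cong)

lemma cinner_std_basis: "x \<in> cvecs N \<Longrightarrow> cinner N x (std_basis n) = x n"
  by (cases "n \<le> N") (simp_all add: cinner_def std_basis_def cvecs_def if_distrib cong: if_cong)

lemma mat_app_cnj_eq_iff:
  "(\<forall>x\<in>cvecs N. mat_app N A (\<lambda>i. cnj (x i)) = mat_app N B (\<lambda>i. cnj (x i)))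
    \<longleftrightarrow> (\<forall>i\<le>N. \<forall>j\<le>N. A i j = B i j)"
proof
  assume eq: "\<forall>x\<in>cvecs N. mat_app N A (\<lambda>i. cnj (x i)) = mat_app N B (\<lambda>i. cnj (x i))"
  show "\<forall>i\<le>N. \<forall>j\<le>N. A i j = B i j"
  proof (intro allI impI)
    fix i j assume "i \<le> N" "j \<le> N"
    have "std_basis j \<in> cvecs N" "(\<lambda>i. cnj (std_basis j i)) = std_basis j"
      using \<open>j \<le> N\<close> by (auto simp: cvecs_def std_basis_def)
    then have "mat_app N A (std_basis j) i = mat_app N B (std_basis j) i"
      using eq by metis
    then show "A i j = B i j"
      using \<open>i \<le> N\<close> \<open>j \<le> N\<close> by (simp add: mat_app_std_basis)
  qed
qed (auto simp: mat_app_def fun_eq_iff intro!: sum.cong)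

lemma conjugation_involutive: "is_conjugation N C \<Longrightarrow> x \<in> cvecs N \<Longrightarrow> C (C x) = x"
  by (simp add: is_conjugation_def)

lemma conjugation_antilinear_sum:
  assumes conj: "is_conjugation N C" and "finite S" and "\<forall>n\<in>S. g n \<in> cvecs N"
  shows "C (\<lambda>i. \<Sum>n\<in>S. u n * g n i) = (\<lambda>i. \<Sum>n\<in>S. cnj (u n) * C (g n) i)"
  using \<open>finite S\<close> \<open>\<forall>n\<in>S. g n \<in> cvecs N\<close>
proof (induction S rule: finite_induct)
  case empty
  have "C (\<lambda>i. 0 * z i) = (\<lambda>i. cnj 0 * C z i)" if "z \<in> cvecs N" for z
    using conj that unfolding is_conjugation_def by blast
  from this[of "\<lambda>i. 0"] show ?case by (simp add: cvecs_def)
next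
  case (insert n S)
  have "(\<lambda>i. u n * g n i) \<in> cvecs N" "(\<lambda>i. \<Sum>m\<in>S. u m * g m i) \<in> cvecs N"
    using insert.prems by (simp_all add: cvecs_def)
  then have "C (\<lambda>i. \<Sum>m\<in>insert n S. u m * g m i)
      = (\<lambda>i. C (\<lambda>i. u n * g n i) i + C (\<lambda>i. \<Sum>m\<in>S. u m * g m i) i)"
    using conj insert.hyps unfolding is_conjugation_def by simp
  also have "\<dots> = (\<lambda>i. \<Sum>m\<in>insert n S. cnj (u m) * C (g m) i)"
    using conj insert by (simp add: is_conjugation_def)
  finally show ?case .
qed

text \<open>Expanding \<open>x = \<Sum>\<^sub>n \<langle>x, f\<^sub>n\<rangle> f\<^sub>n\<close> and using \<open>C f\<^sub>n = f\<^sub>n\<close> gives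
  \<open>C x = \<Sum>\<^sub>n \<langle>f\<^sub>n, x\<rangle> f\<^sub>n\<close>.\<close>

lemma conjugation_fixing_basis_eq:
  assumes conj: "is_conjugation N C" and onb: "orthonormal_basis N f"
    and fixed: "\<forall>n\<le>N. C (f n) = f n" and x: "x \<in> cvecs N"
  shows "C x = mat_app N (basis_conj_matrix N f) (\<lambda>i. cnj (x i))"
proof -
  have f: "\<forall>n\<in>{..N}. f n \<in> cvecs N" using onb by (simp add: orthonormal_basis_def)
  have "C x = C (\<lambda>i. \<Sum>n\<le>N. cinner N x (f n) * f n i)"
    using onb x by (metis orthonormal_basis_def)
  also have "\<dots> = (\<lambda>i. \<Sum>n\<le>N. cnj (cinner N x (f n)) * f n i)"
    using conjugation_antilinear_sum[OF conj _ f] fixed by simp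
  also have "\<dots> = mat_app N (basis_conj_matrix N f) (\<lambda>i. cnj (x i))"
  proof (rule ext)
    fix i
    show "(\<Sum>n\<le>N. cnj (cinner N x (f n)) * f n i) = mat_app N (basis_conj_matrix N f) (\<lambda>i. cnj (x i)) i"
    proof (cases "i \<le> N")
      case True
      have "(\<Sum>n\<le>N. cnj (cinner N x (f n)) * f n i) = (\<Sum>n\<le>N. \<Sum>k\<le>N. f n i * f n k * cnj (x k))"
        by (simp add: cinner_def sum_distrib_left sum_distrib_right mult_ac)
      also have "\<dots> = (\<Sum>k\<le>N. basis_conj_matrix N f i k * cnj (x k))"
        by (subst sum.swap) (simp add: basis_conj_matrix_def sum_distrib_right)
      finally show ?thesis using True by (simp add: mat_app_def)
    next
      case False
      then show ?thesis using f by (simp add: cvecs_def mat_app_def)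
    qed
  qed
  finally show ?thesis .
qed

lemma C_symmetric_iff_commute:
  assumes "is_conjugation N C"
  shows "C_symmetric N C T \<longleftrightarrow> (\<forall>x\<in>cvecs N. mat_app N (mat_adj T) (C x) = C (mat_app N T x))"
  using conjugation_involutive[OF assms] mat_app_in_cvecs unfolding C_symmetric_def by metis

lemma C_symmetric_iff_matrix_eq:
  assumes conj: "is_conjugation N C"
    and C_eq: "\<forall>x\<in>cvecs N. C x = mat_app N J (\<lambda>i. cnj (x i))"
  shows "C_symmetric N C T \<longleftrightarrow>
    (\<forall>k\<le>N. \<forall>l\<le>N. mat_mul N (mat_adj T) J k l = mat_mul N J (\<lambda>i j. cnj (T i j)) k l)"
proof -
  have "\<forall>x\<in>cvecs N. mat_app N (mat_adj T) (C x) = mat_app N (mat_mul N (mat_adj T) J) (\<lambda>i. cnj (x i))"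
    using C_eq by (simp add: mat_app_mat_app)
  moreover have "\<forall>x\<in>cvecs N. C (mat_app N T x) = mat_app N (mat_mul N J (\<lambda>i j. cnj (T i j))) (\<lambda>i. cnj (x i))"
    using C_eq by (simp add: mat_app_in_cvecs cnj_mat_app mat_app_mat_app)
  ultimately show ?thesis
    using C_symmetric_iff_commute[OF conj] mat_app_cnj_eq_iff by simp
qed

theorem theorem9p1:
  fixes N :: nat and a :: "int \<Rightarrow> complex"
    and C :: "(nat \<Rightarrow> complex) \<Rightarrow> (nat \<Rightarrow> complex)"
    and f :: "nat \<Rightarrow> nat \<Rightarrow> complex"
    and c :: "nat \<Rightarrow> nat \<Rightarrow> complex"
  assumes "N \<ge> 1"
    and "is_conjugation N C"
    and "orthonormal_basis N f"
    and "\<forall>n\<le>N. C (f n) = f n"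
    and "\<forall>n m. c n m = (\<Sum>k\<le>N. cinner N (f k) (std_basis n) * cinner N (f k) (std_basis m))"
  shows "C_symmetric N C (toeplitz a) \<longleftrightarrow>
    (\<forall>k\<le>N. \<forall>p\<le>N. (\<Sum>m\<le>N. c m p * cnj (a (int m - int k))) = (\<Sum>m\<le>N. c m k * cnj (a (int m - int p))))"
proof -
  have "\<forall>k\<le>N. f k \<in> cvecs N"
    using assms(3) unfolding orthonormal_basis_def by blast
  then have "c = basis_conj_matrix N f"
    using assms(5) by (simp add: fun_eq_iff basis_conj_matrix_def cinner_std_basis)
  moreover have "C_symmetric N C (toeplitz a) \<longleftrightarrow>
      (\<forall>k\<le>N. \<forall>p\<le>N. mat_mul N (mat_adj (toeplitz a)) (basis_conj_matrix N f) k p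
        = mat_mul N (basis_conj_matrix N f) (\<lambda>i j. cnj (toeplitz a i j)) k p)"
    using C_symmetric_iff_matrix_eq[OF assms(2)] conjugation_fixing_basis_eq[OF assms(2-4)] by simp
  ultimately show ?thesis
    by (simp add: mat_mul_def mat_adj_def toeplitz_def mult.commute basis_conj_matrix_sym[of N f])
qed

end
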